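(* Let $\Omega\subset\mathbb{R}^n$ be a domain, $x,y\in\Omega$, and $\gamma\subset\Omega$ a rectifiable curve joining $x$ to $y$. Suppose that for some $\alpha\in(0,1)$ and $C\ge1$, $$\int_\gamma\operatorname{dist}(z,\partial\Omega)^{\alpha-1}ds(z)\le C\,\operatorname{length}(\gamma)^\alpha.$$ Then (i) there exists $\bar z\in\gamma$ with $\operatorname{length}(\gamma)\le C^{\frac1{1-\alpha}}\operatorname{dist}(\bar z,\partial\Omega)$; and (ii) $$\frac1{\operatorname{length}(\gamma)}\int_\gamma\operatorname{dist}(z,\partial\Omega)^{\alpha-1}ds(z)\le 2C\inf_{z\in\gamma}\operatorname{dist}(z,\partial\Omega)^{\alpha-1}.$$
   Context: $ds$ denotes arc length measure; distances are Euclidean. *)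

theory Defs
  imports "HOL-Analysis.Analysis"
begin

definition variation :: "(real \<Rightarrow> 'a::metric_space) \<Rightarrow> real \<Rightarrow> real \<Rightarrow> real" where
  "variation g a b =
     Sup {(\<Sum>i<m. dist (g (t (Suc i))) (g (t i))) | t m.
            t 0 = a \<and> t m = b \<and> (\<forall>i<m. t i \<le> t (Suc i))}"

definition rectifiable :: "(real \<Rightarrow> 'a::metric_space) \<Rightarrow> bool" where
  "rectifiable g \<longleftrightarrow>
     bdd_above {(\<Sum>i<m. dist (g (t (Suc i))) (g (t i))) | t m.
            t 0 = 0 \<and> t m = 1 \<and> (\<forall>i<m. t i \<le> t (Suc i))}"

definition curve_length :: "(real \<Rightarrow> 'a::metric_space) \<Rightarrow> real" where
  "curve_length g = variation g 0 1"

definition arclen_fun :: "(real \<Rightarrow> 'a::metric_space) \<Rightarrow> real \<Rightarrow> real" where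
  "arclen_fun g t = variation g 0 (max 0 (min 1 t))"

text \<open>Line integral with respect to arc length: \<integral>_g f ds is the Lebesgue--Stieltjes
  integral of f \<circ> g on [0,1] with respect to the arc-length function.\<close>
definition arclength_integral :: "(real \<Rightarrow> 'a::metric_space) \<Rightarrow> ('a \<Rightarrow> real) \<Rightarrow> real" where
  "arclength_integral g f = (LINT t:{0..1}|interval_measure (arclen_fun g). f (g t))"

end

theory Submission
  imports Defs
begin

(*
  Let d be the distance to the boundary, M and m its maximum and minimum along \<gamma>, and L the
  length. Since d powr (\<alpha> - 1) \<ge> M powr (\<alpha> - 1) on \<gamma>, the hypothesis gives
  M powr (\<alpha> - 1) * L \<le> C * L powr \<alpha>, which is (i) with zb a point where d = M.
  For (ii), d is 1-Lipschitz, so M \<le> m + L. If L \<le> M/2 then m \<ge> M/2 and the mean of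
  d powr (\<alpha> - 1) is at most m powr (\<alpha> - 1) \<le> 2 * M powr (\<alpha> - 1); otherwise the
  hypothesis bounds the mean by C * L powr (\<alpha> - 1) \<le> 2 * C * M powr (\<alpha> - 1).
  Both steps compare the arc-length integral with L times the extreme values of the integrand;
  this needs the arc-length function to be monotone and right continuous, so that its
  Lebesgue-Stieltjes measure gives [0,1] the mass L.
*)

definition polygon_length :: "(real \<Rightarrow> 'a::metric_space) \<Rightarrow> (nat \<Rightarrow> real) \<Rightarrow> nat \<Rightarrow> real" where
  "polygon_length g t m = (\<Sum>i<m. dist (g (t (Suc i))) (g (t i)))"

definition is_partition :: "real \<Rightarrow> real \<Rightarrow> (nat \<Rightarrow> real) \<Rightarrow> nat \<Rightarrow> bool" where
  "is_partition a b t m \<longleftrightarrow> t 0 = a \<and> t m = b \<and> (\<forall>i<m. t i \<le> t (Suc i))"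

definition inscribed_lengths :: "(real \<Rightarrow> 'a::metric_space) \<Rightarrow> real \<Rightarrow> real \<Rightarrow> real set" where
  "inscribed_lengths g a b = {polygon_length g t m | t m. is_partition a b t m}"

lemma variation_eq_Sup_inscribed_lengths: "variation g a b = Sup (inscribed_lengths g a b)"
  by (simp add: variation_def inscribed_lengths_def polygon_length_def is_partition_def)

lemma rectifiable_iff_bdd_above: "rectifiable g \<longleftrightarrow> bdd_above (inscribed_lengths g 0 1)"
  by (simp add: rectifiable_def inscribed_lengths_def polygon_length_def is_partition_def)

lemma is_partition_ge_start:
  assumes "is_partition a b t m" "i \<le> m"
  shows "a \<le> t i"
  using assms(2)
proof (induction i)
  case (Suc i)
  then show ?case
    using assms(1) unfolding is_partition_def by (meson Suc_le_lessD dual_order.trans less_imp_le_nat)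
qed (use assms(1) in \<open>simp add: is_partition_def\<close>)

lemma is_partition_clamp:
  assumes "is_partition a c t m" "a \<le> b" "b \<le> c"
  shows "is_partition a b (\<lambda>i. min (t i) b) m" and "is_partition b c (\<lambda>i. max (t i) b) m"
  using assms by (auto simp: is_partition_def)

lemma dist_le_clamped:
  fixes u v b :: real
  assumes "u \<le> v"
  shows "dist (g v) (g u) \<le> dist (g (min v b)) (g (min u b)) + dist (g (max v b)) (g (max u b))"
proof (cases "v \<le> b \<or> b \<le> u")
  case False
  then show ?thesis using dist_triangle[of "g v" "g u" "g b"] by (simp add: max_def min_def dist_commute)
qed (use assms in \<open>auto simp: max_def min_def\<close>)

lemma polygon_length_le_clamped:
  assumes "is_partition a c t m"
  shows "polygon_length g t m
           \<le> polygon_length g (\<lambda>i. min (t i) b) m + polygon_length g (\<lambda>i. max (t i) b) m"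
  unfolding polygon_length_def sum.distrib[symmetric]
  by (rule sum_mono) (use assms in \<open>auto simp: is_partition_def intro: dist_le_clamped\<close>)

lemma inscribed_lengths_chord: "a \<le> b \<Longrightarrow> dist (g b) (g a) \<in> inscribed_lengths g a b"
  unfolding inscribed_lengths_def
  by (rule CollectI, rule exI[of _ "\<lambda>i. if i = 0 then a else b"], rule exI[of _ 1])
     (simp add: polygon_length_def is_partition_def)

lemma inscribed_lengths_nonempty: "a \<le> b \<Longrightarrow> inscribed_lengths g a b \<noteq> {}"
  using inscribed_lengths_chord by blast

lemma sum_lessThan_add:
  "(\<Sum>i<m+n. f i) = (\<Sum>i<m. f i) + (\<Sum>i<n. f (m+i :: nat) :: 'b::comm_monoid_add)"
  by (induction n) (simp_all add: add.assoc)

lemma inscribed_lengths_append: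
  assumes "s1 \<in> inscribed_lengths g a b" "s2 \<in> inscribed_lengths g b c"
  shows "s1 + s2 \<in> inscribed_lengths g a c"
proof -
  obtain t1 m1 where t1: "is_partition a b t1 m1" and s1: "s1 = polygon_length g t1 m1"
    using assms(1) unfolding inscribed_lengths_def by blast
  obtain t2 m2 where t2: "is_partition b c t2 m2" and s2: "s2 = polygon_length g t2 m2"
    using assms(2) unfolding inscribed_lengths_def by blast
  define t where "t i = (if i \<le> m1 then t1 i else t2 (i - m1))" for i
  have "polygon_length g t (m1+m2)
      = polygon_length g t1 m1 + (\<Sum>i<m2. dist (g (t (Suc (m1+i)))) (g (t (m1+i))))"
    unfolding polygon_length_def sum_lessThan_add by (auto simp: t_def intro!: sum.cong)
  also have "(\<Sum>i<m2. dist (g (t (Suc (m1+i)))) (g (t (m1+i)))) = polygon_length g t2 m2"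
    using t1 t2 unfolding polygon_length_def
    by (intro sum.cong) (auto simp: t_def is_partition_def Suc_diff_le)
  finally have "polygon_length g t (m1+m2) = s1 + s2" by (simp add: s1 s2)
  moreover have "t i \<le> t (Suc i)" if "i < m1 + m2" for i
    using that t1 t2 unfolding is_partition_def t_def
    by (cases "i < m1"; cases "i = m1") (auto simp: Suc_diff_le)
  then have "is_partition a c t (m1+m2)"
    using t1 t2 by (auto simp: is_partition_def t_def)
  ultimately show ?thesis
    unfolding inscribed_lengths_def by (intro CollectI exI[of _ t] exI[of _ "m1+m2"]) simp
qed

lemma inscribed_lengths_split:
  assumes "s \<in> inscribed_lengths g a c" "a \<le> b" "b \<le> c"
  shows "\<exists>s1\<in>inscribed_lengths g a b. \<exists>s2\<in>inscribed_lengths g b c. s \<le> s1 + s2"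
proof -
  obtain t m where t: "is_partition a c t m" and s: "s = polygon_length g t m"
    using assms(1) unfolding inscribed_lengths_def by blast
  show ?thesis
    using polygon_length_le_clamped[OF t, of g b] is_partition_clamp[OF t assms(2,3)]
    unfolding s inscribed_lengths_def by blast
qed

lemma bdd_above_inscribed_lengths:
  assumes "rectifiable g" "0 \<le> a" "a \<le> b" "b \<le> 1"
  shows "bdd_above (inscribed_lengths g a b)"
proof -
  obtain B where B: "\<And>s. s \<in> inscribed_lengths g 0 1 \<Longrightarrow> s \<le> B"
    using assms(1) by (auto simp: rectifiable_iff_bdd_above bdd_above_def)
  have "s \<le> B" if s: "s \<in> inscribed_lengths g a b" for s
  proof -
    have "dist (g a) (g 0) \<in> inscribed_lengths g 0 a" "dist (g 1) (g b) \<in> inscribed_lengths g b 1"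
      using assms by (auto intro: inscribed_lengths_chord)
    then have "dist (g a) (g 0) + s + dist (g 1) (g b) \<in> inscribed_lengths g 0 1"
      using s by (blast intro: inscribed_lengths_append)
    from B[OF this] show "s \<le> B" by (smt (verit) zero_le_dist)
  qed
  then show ?thesis by (auto simp: bdd_above_def)
qed

lemma variation_add:
  assumes "rectifiable g" "0 \<le> a" "a \<le> b" "b \<le> c" "c \<le> 1"
  shows "variation g a c = variation g a b + variation g b c"
proof -
  have bdd: "bdd_above (inscribed_lengths g a b)" "bdd_above (inscribed_lengths g b c)"
    "bdd_above (inscribed_lengths g a c)"
    using bdd_above_inscribed_lengths[OF assms(1)] assms by auto
  have ne: "inscribed_lengths g a b \<noteq> {}" "inscribed_lengths g b c \<noteq> {}"
    "inscribed_lengths g a c \<noteq> {}"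
    using assms by (meson inscribed_lengths_nonempty order_trans)+
  have "Sup (inscribed_lengths g a c) \<le> Sup (inscribed_lengths g a b) + Sup (inscribed_lengths g b c)"
  proof (rule cSup_least[OF ne(3)])
    fix s assume "s \<in> inscribed_lengths g a c"
    then obtain s1 s2 where "s1 \<in> inscribed_lengths g a b" "s2 \<in> inscribed_lengths g b c" "s \<le> s1 + s2"
      using inscribed_lengths_split assms by blast
    then show "s \<le> Sup (inscribed_lengths g a b) + Sup (inscribed_lengths g b c)"
      using cSup_upper[OF _ bdd(1)] cSup_upper[OF _ bdd(2)] by (smt (verit))
  qed
  moreover have "s1 + s2 \<le> Sup (inscribed_lengths g a c)"
    if "s1 \<in> inscribed_lengths g a b" "s2 \<in> inscribed_lengths g b c" for s1 s2
    using cSup_upper[OF inscribed_lengths_append[OF that] bdd(3)] .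
  then have "Sup (inscribed_lengths g a b) \<le> Sup (inscribed_lengths g a c) - s2"
    if "s2 \<in> inscribed_lengths g b c" for s2
    using that by (intro cSup_least[OF ne(1)]) (simp add: algebra_simps)
  then have "Sup (inscribed_lengths g b c) \<le> Sup (inscribed_lengths g a c) - Sup (inscribed_lengths g a b)"
    by (intro cSup_least[OF ne(2)]) (simp add: algebra_simps)
  ultimately show ?thesis unfolding variation_eq_Sup_inscribed_lengths by linarith
qed

lemma dist_le_variation:
  assumes "rectifiable g" "0 \<le> a" "a \<le> b" "b \<le> 1"
  shows "dist (g b) (g a) \<le> variation g a b"
  unfolding variation_eq_Sup_inscribed_lengths
  using bdd_above_inscribed_lengths[OF assms] inscribed_lengths_chord[OF assms(3)]
  by (rule cSup_upper[rotated])

lemma variation_nonneg: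
  assumes "rectifiable g" "0 \<le> a" "a \<le> b" "b \<le> 1"
  shows "0 \<le> variation g a b"
  using dist_le_variation[OF assms] zero_le_dist order_trans by blast

lemma variation_self:
  assumes "rectifiable g" "0 \<le> a" "a \<le> 1"
  shows "variation g a a = 0"
  using variation_add[OF assms(1,2), of a a] assms by simp

lemma curve_length_nonneg: "rectifiable g \<Longrightarrow> 0 \<le> curve_length g"
  unfolding curve_length_def by (rule variation_nonneg) auto

lemma dist_le_curve_length:
  assumes "rectifiable g" "u \<in> {0..1}" "v \<in> {0..1}"
  shows "dist (g u) (g v) \<le> curve_length g"
proof -
  have "dist (g b) (g a) \<le> curve_length g" if "0 \<le> a" "a \<le> b" "b \<le> 1" for a b
  proof -
    have "curve_length g = variation g 0 a + variation g a b + variation g b 1"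
      unfolding curve_length_def
      using that variation_add[OF assms(1), of 0 a 1] variation_add[OF assms(1), of a b 1] by simp
    then show ?thesis
      using that dist_le_variation[OF assms(1) that]
        variation_nonneg[OF assms(1), of 0 a] variation_nonneg[OF assms(1), of b 1] by linarith
  qed
  from this[of u v] this[of v u] assms(2,3) show ?thesis
    by (cases "u \<le> v") (auto simp: dist_commute)
qed

lemma polygon_length_two_valued:
  fixes t s :: real
  assumes "\<forall>i<m. q i \<le> q (Suc i)" "\<forall>i\<le>m. q i = t \<or> q i = s" "q 0 = t" "t < s"
  shows "polygon_length g q m = dist (g (q m)) (g t)"
proof -
  define \<phi> where "\<phi> u = (if u = s then dist (g s) (g t) else 0)" for u
  have "dist (g (q (Suc i))) (g (q i)) = \<phi> (q (Suc i)) - \<phi> (q i)" if "i < m" for i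
    using assms(1,4) assms(2)[rule_format, of i] assms(2)[rule_format, of "Suc i"] that
    unfolding \<phi>_def by (auto simp: dist_commute)
  then have "polygon_length g q m = (\<Sum>i<m. \<phi> (q (Suc i)) - \<phi> (q i))"
    unfolding polygon_length_def by (intro sum.cong) auto
  also have "\<dots> = \<phi> (q m) - \<phi> (q 0)" by (rule sum_lessThan_telescope)
  finally show ?thesis using assms(2,3) unfolding \<phi>_def by auto
qed

lemma partition_gap:
  assumes "is_partition a b p k" "a < b"
  obtains q where "a < q" "\<And>i. i \<le> k \<Longrightarrow> p i = a \<or> q \<le> p i"
proof -
  define Q where "Q = {p i | i. i \<le> k \<and> a < p i}"
  have fin: "finite Q" unfolding Q_def by (rule finite_subset[of _ "p ` {..k}"]) auto
  have "b \<in> Q" using assms unfolding Q_def is_partition_def by auto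
  then have "Min Q \<in> Q" using Min_in[OF fin] by blast
  then have "a < Min Q" by (auto simp: Q_def)
  moreover have "\<And>i. i \<le> k \<Longrightarrow> a < p i \<Longrightarrow> Min Q \<le> p i"
    by (rule Min_le[OF fin]) (auto simp: Q_def)
  moreover have "\<And>i. i \<le> k \<Longrightarrow> a \<le> p i" using is_partition_ge_start[OF assms(1)] .
  ultimately show ?thesis by (intro that[of "Min Q"]) (auto simp: order_le_less)
qed

(* A nearly optimal partition of [t,1] has a first point q > t; clamping it at any s < q splits
   off the single chord from g t to g s, which continuity makes small. *)
lemma variation_right_continuous:
  assumes g: "rectifiable g" "continuous_on {0..1} g" and t: "0 \<le> t" "t < 1" and "0 < e"
  shows "\<exists>\<delta>>0. \<forall>s. t < s \<and> s < t + \<delta> \<and> s \<le> 1 \<longrightarrow> variation g t s < e"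
proof -
  have "variation g t 1 - e/2 < Sup (inscribed_lengths g t 1)"
    using \<open>0 < e\<close> by (simp add: variation_eq_Sup_inscribed_lengths)
  then obtain S where "S \<in> inscribed_lengths g t 1" "variation g t 1 - e/2 < S"
    using less_cSupE[OF _ inscribed_lengths_nonempty] t by (metis less_eq_real_def)
  then obtain p k where p: "is_partition t 1 p k" and close: "variation g t 1 - e/2 < polygon_length g p k"
    unfolding inscribed_lengths_def by blast
  obtain q where q: "t < q" "\<And>i. i \<le> k \<Longrightarrow> p i = t \<or> q \<le> p i" using partition_gap[OF p t(2)] by blast
  obtain d where d: "d > 0" "\<And>s. s \<in> {0..1} \<Longrightarrow> dist s t < d \<Longrightarrow> dist (g s) (g t) < e/2"
    using g(2) t \<open>0 < e\<close> unfolding continuous_on_iff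
    by (metis atLeastAtMost_iff half_gt_zero less_eq_real_def)
  show ?thesis
  proof (intro exI[of _ "min d (q - t)"] conjI allI impI)
    show "min d (q - t) > 0" using d q by simp
    fix s assume s: "t < s \<and> s < t + min d (q - t) \<and> s \<le> 1"
    have "\<forall>i\<le>k. min (p i) s = t \<or> min (p i) s = s"
      using q(2) s by (smt (verit))
    then have "polygon_length g (\<lambda>i. min (p i) s) k = dist (g s) (g t)"
      using polygon_length_two_valued[of k "\<lambda>i. min (p i) s" t s g] p s
      by (auto simp: is_partition_def min.coboundedI1)
    also have "\<dots> < e/2" using s t by (intro d(2)) (auto simp: dist_real_def)
    finally have "polygon_length g (\<lambda>i. min (p i) s) k < e/2" .
    moreover have "polygon_length g (\<lambda>i. max (p i) s) k \<le> variation g s 1"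
      unfolding variation_eq_Sup_inscribed_lengths inscribed_lengths_def
      using is_partition_clamp(2)[OF p, of s] bdd_above_inscribed_lengths[OF g(1), of s 1] s t
      by (intro cSup_upper) (auto simp: inscribed_lengths_def)
    moreover have "variation g t 1 = variation g t s + variation g s 1"
      using variation_add[OF g(1), of t s 1] s t by simp
    ultimately show "variation g t s < e"
      using close polygon_length_le_clamped[OF p, of g s] by linarith
  qed
qed

lemma arclen_fun_mono:
  assumes "rectifiable g" "x \<le> y"
  shows "arclen_fun g x \<le> arclen_fun g y"
proof -
  define u w where "u = max 0 (min 1 x)" and "w = max 0 (min 1 y)"
  have uw: "0 \<le> u" "u \<le> w" "w \<le> 1" using assms(2) by (auto simp: u_def w_def)
  then show ?thesis
    using variation_add[OF assms(1) uw(1) order_refl uw(2,3)] variation_nonneg[OF assms(1) uw]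
      variation_add[OF assms(1), of 0 u w]
    by (simp add: arclen_fun_def flip: u_def w_def)
qed

lemma arclen_fun_continuous_right:
  assumes "rectifiable g" "continuous_on {0..1} g"
  shows "continuous (at_right a) (arclen_fun g)"
proof (subst continuous_at_right_real_increasing)
  show "\<And>x y. x \<le> y \<Longrightarrow> arclen_fun g x \<le> arclen_fun g y"
    using arclen_fun_mono[OF assms(1)] .
  show "\<forall>e>0. \<exists>\<delta>>0. arclen_fun g (a + \<delta>) - arclen_fun g a < e"
  proof (intro allI impI)
    fix e :: real assume e: "e > 0"
    consider "a < 0" | "1 \<le> a" | "0 \<le> a" "a < 1" by linarith
    then show "\<exists>\<delta>>0. arclen_fun g (a + \<delta>) - arclen_fun g a < e"
    proof cases
      case 1
      then show ?thesis using e by (intro exI[of _ "-a"]) (auto simp: arclen_fun_def)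
    next
      case 2
      then show ?thesis using e by (intro exI[of _ 1]) (auto simp: arclen_fun_def)
    next
      case 3
      obtain \<delta> where \<delta>: "\<delta> > 0" "\<forall>s. a < s \<and> s < a + \<delta> \<and> s \<le> 1 \<longrightarrow> variation g a s < e"
        using variation_right_continuous[OF assms 3 e] by blast
      define h where "h = min (\<delta>/2) (1 - a)"
      have h: "h > 0" "a + h \<le> 1" "h < \<delta>" using \<delta> 3 by (auto simp: h_def)
      have "arclen_fun g (a + h) - arclen_fun g a = variation g a (a + h)"
        using variation_add[OF assms(1), of 0 a "a + h"] h 3 by (simp add: arclen_fun_def)
      then show ?thesis using \<delta>(2) h by (intro exI[of _ h]) auto
    qed
  qed
qed

lemma measure_arclen_unit_interval:
  assumes "rectifiable g" "continuous_on {0..1} g"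
  shows "emeasure (interval_measure (arclen_fun g)) {0..1} = ennreal (curve_length g)"
    and "measure (interval_measure (arclen_fun g)) {0..1} = curve_length g"
proof -
  let ?M = "interval_measure (arclen_fun g)"
  have Ioc: "emeasure ?M {a<..1} = ennreal (curve_length g)" if "a \<in> {-1, 0}" for a :: real
  proof -
    have "arclen_fun g a = 0" "arclen_fun g 1 = curve_length g"
      using that variation_self[OF assms(1), of 0] by (auto simp: arclen_fun_def curve_length_def)
    then show ?thesis using that
      by (subst emeasure_interval_measure_Ioc)
         (auto intro: arclen_fun_mono[OF assms(1)] arclen_fun_continuous_right[OF assms])
  qed
  have "emeasure ?M {0<..1} \<le> emeasure ?M {0..1}" "emeasure ?M {0..1} \<le> emeasure ?M {-1<..1}"
    by (auto intro!: emeasure_mono)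
  then show e: "emeasure ?M {0..1} = ennreal (curve_length g)" using Ioc by (simp add: antisym)
  then show "measure ?M {0..1} = curve_length g"
    using curve_length_nonneg[OF assms(1)] by (simp add: measure_def)
qed

lemma set_integrable_arclen:
  assumes "rectifiable g" "continuous_on {0..1} g"
    and "continuous_on {0..1} h" "\<And>t. t \<in> {0..1} \<Longrightarrow> \<bar>h t\<bar> \<le> B"
  shows "set_integrable (interval_measure (arclen_fun g)) {0..1::real} (h :: real \<Rightarrow> real)"
  unfolding set_integrable_def
proof (rule integrableI_bounded_set[where A="{0..1}" and B=B])
  have "(\<lambda>x. indicator {0..1} x *\<^sub>R h x) \<in> borel_measurable borel"
    by (rule borel_measurable_continuous_on_indicator) (use assms(3) in auto)
  then show "(\<lambda>x. indicator {0..1} x *\<^sub>R h x) \<in> borel_measurable (interval_measure (arclen_fun g))"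
    by (subst measurable_cong_sets[OF sets_interval_measure refl])
  show "emeasure (interval_measure (arclen_fun g)) {0..1} < \<infinity>"
    using measure_arclen_unit_interval(1)[OF assms(1,2)] by simp
  show "AE x in interval_measure (arclen_fun g). x \<in> {0..1} \<longrightarrow> norm (indicator {0..1} x *\<^sub>R h x) \<le> B"
    using assms(4) by (intro AE_I2) auto
qed auto

lemma arclength_integral_bounds:
  assumes "path g" "rectifiable g" "continuous_on (path_image g) f"
    and "\<And>z. z \<in> path_image g \<Longrightarrow> lo \<le> f z \<and> f z \<le> hi"
  shows "lo * curve_length g \<le> arclength_integral g f"
    and "arclength_integral g f \<le> hi * curve_length g"
proof -
  let ?M = "interval_measure (arclen_fun g)"
  have g: "continuous_on {0..1} g" using assms(1) by (simp add: path_def)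
  have img: "\<And>t. t \<in> {0..1} \<Longrightarrow> g t \<in> path_image g" by (simp add: path_image_def)
  have fg: "continuous_on {0..1} (\<lambda>t. f (g t))"
    using continuous_on_compose[OF g] assms(3) by (simp add: path_image_def o_def)
  have "set_integrable ?M {0..1} (\<lambda>t. f (g t))"
    using assms(4) img by (intro set_integrable_arclen[OF assms(2) g fg, of "max \<bar>lo\<bar> \<bar>hi\<bar>"]) force
  moreover have "set_integrable ?M {0..1} (\<lambda>_. c)" for c :: real
    by (rule set_integrable_arclen[OF assms(2) g, of _ "\<bar>c\<bar>"]) auto
  moreover have "(LINT t:{0..1}|?M. c) = c * curve_length g" for c :: real
    using measure_arclen_unit_interval[OF assms(2) g] by (simp add: set_integral_const)
  ultimately show "lo * curve_length g \<le> arclength_integral g f"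
    and "arclength_integral g f \<le> hi * curve_length g"
    unfolding arclength_integral_def using assms(4) img
    by (metis set_integral_mono)+
qed

lemma powr_le_twice_powr_of_half_le:
  fixes M x \<alpha> :: real
  assumes "0 < M" "M/2 \<le> x" "0 \<le> \<alpha>" "\<alpha> \<le> 1"
  shows "x powr (\<alpha> - 1) \<le> 2 * M powr (\<alpha> - 1)"
proof -
  have "x powr (\<alpha> - 1) \<le> (M/2) powr (\<alpha> - 1)" using assms by (intro powr_mono2') auto
  also have "\<dots> = M powr (\<alpha> - 1) * 2 powr (1 - \<alpha>)"
    using assms(1) by (simp add: powr_divide powr_minus_divide[of 2 "1 - \<alpha>", simplified])
  also have "\<dots> \<le> M powr (\<alpha> - 1) * 2"
    using powr_mono[of "1 - \<alpha>" 1 2] assms by (intro mult_left_mono) auto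
  finally show ?thesis by simp
qed

lemma le_powr_of_powr_integral_bound:
  fixes L M C \<alpha> :: real
  assumes "0 \<le> L" "0 < M" "\<alpha> < 1" "0 < C"
    and "M powr (\<alpha> - 1) * L \<le> C * L powr \<alpha>"
  shows "L \<le> C powr (1 / (1 - \<alpha>)) * M"
proof (cases "L = 0")
  case False
  define \<beta> where "\<beta> = 1 - \<alpha>"
  have \<beta>: "0 < \<beta>" "\<alpha> - 1 = - \<beta>" using assms(3) by (auto simp: \<beta>_def)
  have L: "L = L powr \<alpha> * L powr \<beta>" using assms(1) False by (simp add: \<beta>_def flip: powr_add)
  have "L powr \<alpha> * (L powr \<beta> / M powr \<beta>) \<le> L powr \<alpha> * C"
    using assms(5) unfolding \<beta>(2) powr_minus_divide by (subst (asm) L) (simp add: algebra_simps)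
  then have "L powr \<beta> \<le> C * M powr \<beta>"
    using assms(1,2) False by (simp add: divide_le_eq)
  then have "(L powr \<beta>) powr (1/\<beta>) \<le> (C * M powr \<beta>) powr (1/\<beta>)"
    using \<beta>(1) by (intro powr_mono2) auto
  then show ?thesis using \<beta>(1) assms(1,2,4) by (simp add: powr_mult powr_powr \<beta>_def)
qed (use assms in simp)

lemma mean_le_twice_powr:
  fixes I L M m C \<alpha> :: real
  assumes "0 \<le> L" "0 < m" "0 < M" "M \<le> m + L" "0 \<le> \<alpha>" "\<alpha> \<le> 1" "1 \<le> C"
    and "I \<le> m powr (\<alpha> - 1) * L" "I \<le> C * L powr \<alpha>"
  shows "I / L \<le> 2 * C * M powr (\<alpha> - 1)"
proof -
  have "I / L \<le> 2 * M powr (\<alpha> - 1)" if "L \<le> M/2"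
  proof -
    have "I / L \<le> m powr (\<alpha> - 1)" using assms(1,8) by (simp add: divide_le_eq)
    also have "\<dots> \<le> 2 * M powr (\<alpha> - 1)"
      using that assms by (intro powr_le_twice_powr_of_half_le) auto
    finally show ?thesis .
  qed
  moreover have "I / L \<le> C * (2 * M powr (\<alpha> - 1))" if "M/2 < L"
  proof -
    have "I / L \<le> C * L powr \<alpha> / L" using assms(1,9) by (simp add: divide_right_mono)
    also have "\<dots> = C * L powr (\<alpha> - 1)" using that assms(3) by (simp add: powr_diff)
    also have "\<dots> \<le> C * (2 * M powr (\<alpha> - 1))"
      using that assms by (intro mult_left_mono powr_le_twice_powr_of_half_le) auto
    finally show ?thesis .
  qed
  moreover have "2 * M powr (\<alpha> - 1) \<le> 2 * C * M powr (\<alpha> - 1)"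
    using assms(7) mult_right_mono[of 1 C "M powr (\<alpha> - 1)"] by simp
  ultimately show ?thesis by (cases "L \<le> M/2") (auto simp: mult.assoc mult.left_commute)
qed

lemma powr_arclength_integral_bound_consequences:
  fixes g :: "real \<Rightarrow> 'a::metric_space" and d :: "'a \<Rightarrow> real"
  assumes "path g" "rectifiable g" "1-lipschitz_on (path_image g) d"
    and "\<And>z. z \<in> path_image g \<Longrightarrow> 0 < d z" and "0 < \<alpha>" "\<alpha> < 1" "1 \<le> C"
    and "arclength_integral g (\<lambda>z. d z powr (\<alpha> - 1)) \<le> C * curve_length g powr \<alpha>"
  shows "(\<exists>zb\<in>path_image g. curve_length g \<le> C powr (1 / (1 - \<alpha>)) * d zb)
       \<and> arclength_integral g (\<lambda>z. d z powr (\<alpha> - 1)) / curve_length g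
           \<le> 2 * C * (INF z\<in>path_image g. d z powr (\<alpha> - 1))"
proof -
  let ?K = "path_image g" and ?I = "arclength_integral g (\<lambda>z. d z powr (\<alpha> - 1))"
  define L where "L = curve_length g"
  have d: "continuous_on ?K d" using assms(3) by (rule lipschitz_on_continuous_on)
  have K: "compact ?K" "?K \<noteq> {}" using compact_path_image[OF assms(1)] by (auto simp: path_image_def)
  obtain zb where zb: "zb \<in> ?K" "\<And>z. z \<in> ?K \<Longrightarrow> d z \<le> d zb"
    using continuous_attains_sup[OF K d] by blast
  obtain zm where zm: "zm \<in> ?K" "\<And>z. z \<in> ?K \<Longrightarrow> d zm \<le> d z"
    using continuous_attains_inf[OF K d] by blast
  have powr_between: "d zb powr (\<alpha> - 1) \<le> d z powr (\<alpha> - 1) \<and> d z powr (\<alpha> - 1) \<le> d zm powr (\<alpha> - 1)"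
    if "z \<in> ?K" for z
    using that zb zm assms(4,6) by (auto intro!: powr_mono2')
  have "continuous_on ?K (\<lambda>z. d z powr (\<alpha> - 1))"
    using assms(4) by (intro continuous_on_powr d continuous_on_const) force
  note I_bounds = arclength_integral_bounds[OF assms(1,2) this powr_between]
  have L: "0 \<le> L" unfolding L_def using assms(2) by (rule curve_length_nonneg)
  have "L \<le> C powr (1 / (1 - \<alpha>)) * d zb"
    using I_bounds(1) assms(4-8) zb(1) L unfolding L_def
    by (intro le_powr_of_powr_integral_bound) auto
  moreover have "d zb \<le> d zm + L"
  proof -
    obtain u v where "u \<in> {0..1}" "v \<in> {0..1}" "g u = zb" "g v = zm"
      using zb(1) zm(1) by (auto simp: path_image_def)
    then have "dist zb zm \<le> L" unfolding L_def using dist_le_curve_length[OF assms(2)] by blast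
    moreover have "dist (d zb) (d zm) \<le> dist zb zm"
      using lipschitz_onD[OF assms(3) zb(1) zm(1)] by simp
    ultimately show ?thesis by (simp add: dist_real_def)
  qed
  then have "?I / L \<le> 2 * C * d zb powr (\<alpha> - 1)"
    using I_bounds(2) assms(4-8) zb(1) zm(1) L unfolding L_def
    by (intro mean_le_twice_powr) auto
  moreover have "d zb powr (\<alpha> - 1) \<le> (INF z\<in>?K. d z powr (\<alpha> - 1))"
    using powr_between by (intro cINF_greatest K(2)) blast
  then have "2 * C * d zb powr (\<alpha> - 1) \<le> 2 * C * (INF z\<in>?K. d z powr (\<alpha> - 1))"
    using assms(7) by (intro mult_left_mono) auto
  ultimately show ?thesis using zb(1) unfolding L_def by auto
qed

theorem lemma2p2:
  fixes \<Omega> :: "'a::euclidean_space set" and x y :: 'a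
    and \<gamma> :: "real \<Rightarrow> 'a" and \<alpha> C :: real
  assumes "open \<Omega>" and "connected \<Omega>" and "\<Omega> \<noteq> UNIV"
    and "x \<in> \<Omega>" and "y \<in> \<Omega>"
    and "path \<gamma>" and "rectifiable \<gamma>" and "path_image \<gamma> \<subseteq> \<Omega>"
    and "pathstart \<gamma> = x" and "pathfinish \<gamma> = y"
    and "0 < \<alpha>" and "\<alpha> < 1" and "1 \<le> C"
    and "arclength_integral \<gamma> (\<lambda>z. infdist z (frontier \<Omega>) powr (\<alpha> - 1))
           \<le> C * curve_length \<gamma> powr \<alpha>"
  shows "(\<exists>zb\<in>path_image \<gamma>.
            curve_length \<gamma> \<le> C powr (1 / (1 - \<alpha>)) * infdist zb (frontier \<Omega>))
       \<and> arclength_integral \<gamma> (\<lambda>z. infdist z (frontier \<Omega>) powr (\<alpha> - 1)) / curve_length \<gamma>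
           \<le> 2 * C * (INF z\<in>path_image \<gamma>. infdist z (frontier \<Omega>) powr (\<alpha> - 1))"
proof (rule powr_arclength_integral_bound_consequences)
  show "1-lipschitz_on (path_image \<gamma>) (\<lambda>z. infdist z (frontier \<Omega>))"
    by (intro lipschitz_onI) (auto simp: dist_real_def infdist_triangle_abs)
  have "frontier \<Omega> \<noteq> {}" using frontier_not_empty assms(3,4) by blast
  moreover have "z \<notin> frontier \<Omega>" if "z \<in> \<Omega>" for z
    using that assms(1) by (simp add: frontier_def interior_open)
  ultimately show "0 < infdist z (frontier \<Omega>)" if "z \<in> path_image \<gamma>" for z
    using that assms(8) by (auto intro: infdist_pos_not_in_closed)
qed (use assms in auto)

end
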